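(* Let $(\mathcal{G},S)$ be an instance of \textsc{Temporally Disjoint Walks} where $\mathcal{G}$ is a temporal line, and let $\mathcal{S}$ be a solution (a family of pairwise temporally disjoint temporal $(s_i,z_i)$-walks, one for each $(s_i,z_i)\in S$) that minimizes the sum of the lengths of its walks among all solutions. Let $W\in\mathcal{S}$ be a temporal $(s,z)$-walk in which the transitions $(a,b,t),(b,a,t')$ with $t<t'$ are consecutive. Then there exists a temporal $(s',z')$-walk $W'$ in $\mathcal{S}$ that contains a transition $(c,a,t'')$ or $(a,c,t'')$ for some vertex $c$ and some $t''$ with $t<t''<t'$.
   Context: A temporal graph $\mathcal{G}=(V,E_1,\ldots,E_T)$ has vertex set $V$ and edge sets $E_1,\ldots,E_T\subseteq\binom{V}{2}$; it is a temporal line if its underlying graph $(V,\bigcup_i E_i)$ is a path. A temporal $(s,z)$-walk of length $k$ from $s=v_0$ to $z=v_k$ is a sequence of transitions $((v_{i-1},v_i,t_i))_{i=1}^k$ with $\{v_{i-1},v_i\}\in E_{t_i}$ and $t_1<\cdots<t_k$. It occupies $v_i$ during $[t_i,t_{i+1}]$ for $i\in[k-1]$, $v_0$ during $[t_1,t_1]$ and $v_k$ during $[t_k,t_k]$. Two temporal walks are temporally disjoint unless some vertex is occupied by both during intersecting time intervals. \textsc{Temporally Disjoint Walks} asks, given $\mathcal{G}$ and a multiset $S\subseteq V\times V$ of source-sink pairs, for pairwise temporally disjoint temporal $(s_i,z_i)$-walks, one for each $(s_i,z_i)\in S$. *)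

theory Defs
  imports Main
begin

type_synonym 'v transition = "'v \<times> 'v \<times> nat"
type_synonym 'v twalk = "'v transition list"

definition tr_src :: "'v transition \<Rightarrow> 'v" where "tr_src x = fst x"
definition tr_dst :: "'v transition \<Rightarrow> 'v" where "tr_dst x = fst (snd x)"
definition tr_time :: "'v transition \<Rightarrow> nat" where "tr_time x = snd (snd x)"

definition temporal_graph :: "'v set \<Rightarrow> (nat \<Rightarrow> 'v set set) \<Rightarrow> nat \<Rightarrow> bool" where
  "temporal_graph V E T \<longleftrightarrow> finite V \<and>
     (\<forall>i\<in>{1..T}. E i \<subseteq> {{x, y} | x y. x \<in> V \<and> y \<in> V \<and> x \<noteq> y})"

text \<open>Underlying graph (V, union of E 1..E T) is a path: vertices enumerated by a nonempty
  distinct list vs, edges exactly the consecutive pairs.\<close>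
definition temporal_line :: "'v set \<Rightarrow> (nat \<Rightarrow> 'v set set) \<Rightarrow> nat \<Rightarrow> bool" where
  "temporal_line V E T \<longleftrightarrow> temporal_graph V E T \<and>
     (\<exists>vs. vs \<noteq> [] \<and> distinct vs \<and> set vs = V \<and>
        (\<Union>i\<in>{1..T}. E i) = {{vs ! j, vs ! (j + 1)} | j. j + 1 < length vs})"

text \<open>Temporal (s,z)-walk. The empty walk (length 0) is a walk from s to s.\<close>
definition temporal_walk :: "'v set \<Rightarrow> (nat \<Rightarrow> 'v set set) \<Rightarrow> nat \<Rightarrow> 'v \<Rightarrow> 'v \<Rightarrow> 'v twalk \<Rightarrow> bool" where
  "temporal_walk V E T s z W \<longleftrightarrow>
     (W = [] \<and> s = z \<and> s \<in> V) \<or>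
     (W \<noteq> [] \<and> tr_src (hd W) = s \<and> tr_dst (last W) = z \<and>
      (\<forall>i < length W. tr_time (W ! i) \<in> {1..T} \<and>
          {tr_src (W ! i), tr_dst (W ! i)} \<in> E (tr_time (W ! i))) \<and>
      (\<forall>i. i + 1 < length W \<longrightarrow> tr_dst (W ! i) = tr_src (W ! (i + 1)) \<and>
          tr_time (W ! i) < tr_time (W ! (i + 1))))"

text \<open>Occupation list of a walk ((v_{i-1},v_i,t_i))_{i=1..k}: v_0 during [t_1,t_1],
  v_i during [t_i,t_{i+1}] for 1 <= i <= k-1, v_k during [t_k,t_k].
  (The empty walk occupies nothing.)\<close>
definition occupation :: "'v twalk \<Rightarrow> ('v \<times> nat set) list" where
  "occupation W = (if W = [] then [] else
     [(tr_src (hd W), {tr_time (hd W)..tr_time (hd W)})] @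
     map (\<lambda>i. (tr_dst (W ! (i - 1)), {tr_time (W ! (i - 1))..tr_time (W ! i)})) [1..<length W] @
     [(tr_dst (last W), {tr_time (last W)..tr_time (last W)})])"

definition temporally_disjoint :: "'v twalk \<Rightarrow> 'v twalk \<Rightarrow> bool" where
  "temporally_disjoint W1 W2 \<longleftrightarrow>
     \<not> (\<exists>(v, I) \<in> set (occupation W1). \<exists>(u, J) \<in> set (occupation W2). v = u \<and> I \<inter> J \<noteq> {})"

text \<open>The multiset S of source-sink pairs is given as a list (indexed family);
  a solution assigns the walk P ! i to the pair S ! i.\<close>
definition tdw_solution ::
  "'v set \<Rightarrow> (nat \<Rightarrow> 'v set set) \<Rightarrow> nat \<Rightarrow> ('v \<times> 'v) list \<Rightarrow> 'v twalk list \<Rightarrow> bool" where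
  "tdw_solution V E T S P \<longleftrightarrow> length P = length S \<and>
     (\<forall>i < length S. temporal_walk V E T (fst (S ! i)) (snd (S ! i)) (P ! i)) \<and>
     (\<forall>i < length S. \<forall>j < length S. i \<noteq> j \<longrightarrow> temporally_disjoint (P ! i) (P ! j))"

definition total_length :: "'v twalk list \<Rightarrow> nat" where
  "total_length P = sum_list (map length P)"

end

theory Submission
  imports Defs
begin

(* If no walk enters or leaves a strictly between t and t', the detour a -> b -> a can be cut out
   of W.  The shortened walk occupies nothing W did not, except a during [t, t'].  No other walk
   is at a then: its stay at a began with a transition at a at some time lo <= t', which lies
   outside (t, t'); so the stay covers t or starts at t', times at which W itself is at a.  Hence
   the shortened walk yields a solution of smaller total length, contradicting minimality. *)

lemma tr_accessors [simp]:
  "tr_src (u, v, t) = u" "tr_dst (u, v, t) = v" "tr_time (u, v, t) = t"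
  by (simp_all add: tr_src_def tr_dst_def tr_time_def)

definition precedes :: "'v transition \<Rightarrow> 'v transition \<Rightarrow> bool" where
  "precedes e e' \<longleftrightarrow> tr_dst e = tr_src e' \<and> tr_time e < tr_time e'"

definition valid_transition :: "(nat \<Rightarrow> 'v set set) \<Rightarrow> nat \<Rightarrow> 'v transition \<Rightarrow> bool" where
  "valid_transition E T e \<longleftrightarrow> tr_time e \<in> {1..T} \<and> {tr_src e, tr_dst e} \<in> E (tr_time e)"

lemma temporal_walk_iff_successively:
  "temporal_walk V E T s z W \<longleftrightarrow> (W = [] \<and> s = z \<and> s \<in> V) \<or>
     (W \<noteq> [] \<and> tr_src (hd W) = s \<and> tr_dst (last W) = z \<and>
      (\<forall>e \<in> set W. valid_transition E T e) \<and> successively precedes W)"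
  unfolding temporal_walk_def valid_transition_def successively_conv_nth precedes_def
  by (auto simp: all_set_conv_all_nth)

lemma successively_precedes_remove_detour:
  assumes "successively precedes (xs @ (a, b, t) # (b, a, t') # ys)"
  shows "successively precedes (xs @ ys)"
  using assms by (auto simp: successively_append_iff successively_Cons precedes_def)

lemma temporal_walk_remove_detour:
  assumes walk: "temporal_walk V E T s z (xs @ (a, b, t) # (b, a, t') # ys)" and "s \<in> V"
  shows "temporal_walk V E T s z (xs @ ys)"
proof -
  have valid: "\<forall>e \<in> set (xs @ ys). valid_transition E T e"
    and ends: "tr_src (hd (xs @ [(a, b, t)])) = s" "tr_dst (last ((b, a, t') # ys)) = z"
    and junctions: "xs \<noteq> [] \<Longrightarrow> tr_dst (last xs) = a" "ys \<noteq> [] \<Longrightarrow> tr_src (hd ys) = a"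
    using walk unfolding temporal_walk_iff_successively
    by (auto simp: successively_append_iff successively_Cons precedes_def hd_append)
  have "successively precedes (xs @ ys)"
    using walk successively_precedes_remove_detour unfolding temporal_walk_iff_successively by auto
  then show ?thesis
    using valid ends junctions \<open>s \<in> V\<close> unfolding temporal_walk_iff_successively
    by (cases "xs = []"; cases "ys = []") (auto simp: hd_append)
qed

definition occupies :: "'v twalk \<Rightarrow> 'v \<Rightarrow> nat \<Rightarrow> bool" where
  "occupies W v x \<longleftrightarrow> (\<exists>I. (v, I) \<in> set (occupation W) \<and> x \<in> I)"

lemma temporally_disjoint_iff_occupies:
  "temporally_disjoint W1 W2 \<longleftrightarrow> \<not> (\<exists>v x. occupies W1 v x \<and> occupies W2 v x)"
  unfolding temporally_disjoint_def occupies_def by blast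

lemma temporally_disjoint_sym: "temporally_disjoint W1 W2 \<Longrightarrow> temporally_disjoint W2 W1"
  unfolding temporally_disjoint_iff_occupies by blast

lemma occupation_single:
  "occupation [e] = [(tr_src e, {tr_time e..tr_time e}), (tr_dst e, {tr_time e..tr_time e})]"
  by (simp add: occupation_def)

lemma occupation_Cons_Cons:
  "occupation (e # e' # W) =
     (tr_src e, {tr_time e..tr_time e}) # (tr_dst e, {tr_time e..tr_time e'}) #
     tl (occupation (e' # W))"
  unfolding occupation_def by (simp add: upt_conv_Cons map_Suc_upt[symmetric] del: upt_Suc)

lemma occupies_Nil [simp]: "\<not> occupies [] v x"
  by (simp add: occupies_def occupation_def)

lemma occupies_single: "occupies [e] v x \<longleftrightarrow> (v = tr_src e \<or> v = tr_dst e) \<and> x = tr_time e"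
  by (auto simp: occupies_def occupation_single)

lemma occupies_Cons_Cons:
  assumes "precedes e e'"
  shows "occupies (e # e' # W) v x \<longleftrightarrow>
    (v = tr_src e \<and> x = tr_time e) \<or> (v = tr_dst e \<and> x \<in> {tr_time e..tr_time e'}) \<or>
    occupies (e' # W) v x"
proof -
  obtain rest where rest: "occupation (e' # W) = (tr_src e', {tr_time e'..tr_time e'}) # rest"
    by (simp add: occupation_def)
  have "occupies (e # e' # W) v x \<longleftrightarrow> (v = tr_src e \<and> x = tr_time e) \<or>
      (v = tr_dst e \<and> x \<in> {tr_time e..tr_time e'}) \<or> (\<exists>I. (v, I) \<in> set rest \<and> x \<in> I)"
    unfolding occupies_def occupation_Cons_Cons rest
    by (simp add: conj_disj_distribR ex_disj_distrib)
  moreover have "occupies (e' # W) v x \<longleftrightarrow>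
      (v = tr_src e' \<and> x = tr_time e') \<or> (\<exists>I. (v, I) \<in> set rest \<and> x \<in> I)"
    unfolding occupies_def rest by (simp add: conj_disj_distribR ex_disj_distrib)
  \<comment> \<open>The first stay of \<open>e' # W\<close> lies inside the stay at \<open>tr_dst e\<close>, which needs \<open>precedes e e'\<close>.\<close>
  ultimately show ?thesis
    using assms unfolding precedes_def by auto
qed

lemma occupies_append:
  assumes "successively precedes (xs @ ys)" and "xs \<noteq> []" and "ys \<noteq> []"
  shows "occupies (xs @ ys) v x \<longleftrightarrow> occupies xs v x \<or> occupies ys v x \<or>
    (v = tr_dst (last xs) \<and> x \<in> {tr_time (last xs)..tr_time (hd ys)})"
  using assms(2,1)
proof (induction xs rule: list_nonempty_induct)
  case (single e)
  obtain y ys' where ys: "ys = y # ys'"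
    using \<open>ys \<noteq> []\<close> by (cases ys) auto
  have "precedes e y"
    using single ys by simp
  then show ?case
    unfolding ys by (auto simp: occupies_Cons_Cons occupies_single precedes_def)
next
  case (cons e xs)
  obtain x' xs' where xs: "xs = x' # xs'"
    using \<open>xs \<noteq> []\<close> by (cases xs) auto
  have "precedes e x'" and "successively precedes (xs @ ys)"
    using cons.prems by (simp_all add: xs)
  then show ?case
    using cons.IH unfolding xs by (auto simp: occupies_Cons_Cons)
qed

lemma occupies_append_mono:
  assumes "successively precedes (xs @ ys)" and "occupies xs v x \<or> occupies ys v x"
  shows "occupies (xs @ ys) v x"
  using assms occupies_append[OF assms(1)] by (cases "xs = [] \<or> ys = []") auto

lemma occupies_detour_ends:
  assumes chain: "successively precedes (xs @ (a, b, t) # (b, a, t') # ys)"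
  shows "occupies (xs @ (a, b, t) # (b, a, t') # ys) a t"
    and "occupies (xs @ (a, b, t) # (b, a, t') # ys) a t'"
proof -
  have chain_tail: "successively precedes ([(a, b, t), (b, a, t')] @ ys)"
    using chain by (simp add: successively_append_iff)
  have "precedes (a, b, t) (b, a, t')"
    using chain by (simp add: successively_append_iff)
  then have "occupies [(a, b, t), (b, a, t')] a t" "occupies [(a, b, t), (b, a, t')] a t'"
    by (simp_all add: occupies_Cons_Cons occupies_single)
  then show "occupies (xs @ (a, b, t) # (b, a, t') # ys) a t"
    and "occupies (xs @ (a, b, t) # (b, a, t') # ys) a t'"
    using occupies_append_mono[OF chain_tail] occupies_append_mono[of xs, OF chain]
    by simp_all
qed

lemma occupies_remove_detour:
  assumes chain: "successively precedes (xs @ (a, b, t) # (b, a, t') # ys)"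
    and occ: "occupies (xs @ ys) v x"
  shows "occupies (xs @ (a, b, t) # (b, a, t') # ys) v x \<or> (v = a \<and> x \<in> {t..t'})"
proof (cases "xs = [] \<or> ys = []")
  case True
  then have "occupies xs v x \<or> occupies ((a, b, t) # (b, a, t') # ys) v x"
    using occ occupies_append_mono[of "[(a, b, t), (b, a, t')]" ys] chain
    by (auto simp: successively_append_iff)
  then show ?thesis
    using occupies_append_mono[OF chain] by blast
next
  case False
  have chain_tail: "successively precedes ([(a, b, t), (b, a, t')] @ ys)"
    using chain by (simp add: successively_append_iff)
  have junctions: "tr_dst (last xs) = a" "tr_time (last xs) < t" "t' < tr_time (hd ys)"
    using chain False by (auto simp: successively_append_iff successively_Cons precedes_def)
  have "occupies xs v x \<or> occupies ys v x \<or>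
      (v = a \<and> x \<in> {tr_time (last xs)..tr_time (hd ys)})"
    using occ occupies_append[OF successively_precedes_remove_detour[OF chain]] False junctions
    by simp
  moreover have "occupies (xs @ (a, b, t) # (b, a, t') # ys) a x"
    if "x \<in> {tr_time (last xs)..t} \<union> {t'..tr_time (hd ys)}"
    using that occupies_append[OF chain] occupies_append[OF chain_tail] occupies_append_mono[OF chain]
      False junctions by auto
  moreover have "occupies (xs @ (a, b, t) # (b, a, t') # ys) v x" if "occupies ys v x"
    using that occupies_append_mono[OF chain_tail] occupies_append_mono[OF chain] by simp
  ultimately show ?thesis
    using occupies_append_mono[OF chain] by fastforce
qed

lemma occupation_stay_starts_with_transition:
  assumes "(v, I) \<in> set (occupation W)"
  shows "\<exists>c lo hi. I = {lo..hi} \<and> ((c, v, lo) \<in> set W \<or> (v, c, lo) \<in> set W)"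
  using assms
proof (induction W rule: induct_list012)
  case (2 e)
  then show ?case
    by (cases e) (auto simp: occupation_single simp del: atLeastAtMost_singleton)
next
  case (3 e e' W)
  obtain u w s where e: "e = (u, w, s)"
    by (cases e)
  have "set (tl (occupation (e' # W))) \<subseteq> set (occupation (e' # W))"
    by (cases "occupation (e' # W)") auto
  then consider "v = u" "I = {s..s}" | "v = w" "I = {s..tr_time e'}"
    | "(v, I) \<in> set (occupation (e' # W))"
    using "3.prems" unfolding occupation_Cons_Cons e by (auto simp del: atLeastAtMost_singleton)
  then show ?case
  proof cases
    case 1
    then have "(v, w, s) \<in> set (e # e' # W)"
      by (simp add: e)
    with 1 show ?thesis
      by blast
  next
    case 2
    then have "(u, v, s) \<in> set (e # e' # W)"
      by (simp add: e)
    with 2 show ?thesis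
      by blast
  next
    case 3
    then obtain c lo hi where "I = {lo..hi}" "(c, v, lo) \<in> set (e' # W) \<or> (v, c, lo) \<in> set (e' # W)"
      using "3.IH"(2) by blast
    then show ?thesis
      by (metis list.set_intros(2))
  qed
qed (simp add: occupation_def)

lemma occupies_since_transition:
  assumes "occupies W v x"
  obtains c lo where "(c, v, lo) \<in> set W \<or> (v, c, lo) \<in> set W" and "lo \<le> x"
    and "\<And>y. y \<in> {lo..x} \<Longrightarrow> occupies W v y"
proof -
  obtain I where stay: "(v, I) \<in> set (occupation W)" and "x \<in> I"
    using assms by (auto simp: occupies_def)
  moreover obtain c lo hi where "I = {lo..hi}" and "(c, v, lo) \<in> set W \<or> (v, c, lo) \<in> set W"
    using occupation_stay_starts_with_transition[OF stay] by blast
  moreover have "occupies W v y" if "y \<in> {lo..x}" for y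
    unfolding occupies_def using stay that \<open>x \<in> I\<close> \<open>I = {lo..hi}\<close> by auto
  ultimately show ?thesis
    using that by simp
qed

lemma temporally_disjoint_remove_detour:
  assumes chain: "successively precedes (xs @ (a, b, t) # (b, a, t') # ys)"
    and disjoint: "temporally_disjoint (xs @ (a, b, t) # (b, a, t') # ys) Q"
    and no_visit: "\<And>c t''. (c, a, t'') \<in> set Q \<or> (a, c, t'') \<in> set Q \<Longrightarrow> t'' \<notin> {t<..<t'}"
  shows "temporally_disjoint (xs @ ys) Q"
proof -
  have "\<not> occupies Q a t" and "\<not> occupies Q a t'"
    using disjoint occupies_detour_ends[OF chain] unfolding temporally_disjoint_iff_occupies by blast+
  have Q_avoids_a: "\<not> occupies Q a x" if "x \<in> {t..t'}" for x
  proof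
    assume "occupies Q a x"
    then obtain c lo where "(c, a, lo) \<in> set Q \<or> (a, c, lo) \<in> set Q" and "lo \<le> x"
      and since: "\<And>y. y \<in> {lo..x} \<Longrightarrow> occupies Q a y"
      by (erule occupies_since_transition)
    then have "lo \<le> t \<or> lo = t'"
      using no_visit that by fastforce
    then show False
      using since that \<open>lo \<le> x\<close> \<open>\<not> occupies Q a t\<close> \<open>\<not> occupies Q a t'\<close> by auto
  qed
  show ?thesis
    using disjoint occupies_remove_detour[OF chain] Q_avoids_a
    unfolding temporally_disjoint_iff_occupies by blast
qed

lemma tdw_solution_update:
  assumes sol: "tdw_solution V E T S P" and "i < length P"
    and walk: "temporal_walk V E T (fst (S ! i)) (snd (S ! i)) W"
    and disjoint: "\<And>j. j < length P \<Longrightarrow> j \<noteq> i \<Longrightarrow> temporally_disjoint W (P ! j)"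
  shows "tdw_solution V E T S (P[i := W])"
  using assms temporally_disjoint_sym unfolding tdw_solution_def
  by (auto simp: nth_list_update)

lemma total_length_update:
  "i < length P \<Longrightarrow> total_length (P[i := W]) + length (P ! i) = total_length P + length W"
  unfolding total_length_def by (induction P arbitrary: i) (auto split: nat.split)

lemma tdw_solution_remove_detour:
  assumes sol: "tdw_solution V E T S P" and "set S \<subseteq> V \<times> V" and i: "i < length P"
    and detour: "P ! i = xs @ (a, b, t) # (b, a, t') # ys"
    and no_visit: "\<And>j c t''. j < length P \<Longrightarrow> j \<noteq> i \<Longrightarrow>
      (c, a, t'') \<in> set (P ! j) \<or> (a, c, t'') \<in> set (P ! j) \<Longrightarrow> t'' \<notin> {t<..<t'}"
  shows "tdw_solution V E T S (P[i := xs @ ys])"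
proof (rule tdw_solution_update[OF sol i])
  have walk: "temporal_walk V E T (fst (S ! i)) (snd (S ! i)) (P ! i)"
    using sol i unfolding tdw_solution_def by auto
  moreover have "fst (S ! i) \<in> V"
    using \<open>set S \<subseteq> V \<times> V\<close> i sol unfolding tdw_solution_def by (auto dest: nth_mem)
  ultimately show "temporal_walk V E T (fst (S ! i)) (snd (S ! i)) (xs @ ys)"
    unfolding detour by (rule temporal_walk_remove_detour)
  have chain: "successively precedes (xs @ (a, b, t) # (b, a, t') # ys)"
    using walk unfolding detour temporal_walk_iff_successively by auto
  show "temporally_disjoint (xs @ ys) (P ! j)" if j: "j < length P" "j \<noteq> i" for j
  proof (rule temporally_disjoint_remove_detour[OF chain])
    show "temporally_disjoint (xs @ (a, b, t) # (b, a, t') # ys) (P ! j)"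
      using sol i j unfolding tdw_solution_def detour[symmetric] by auto
  qed (rule no_visit[OF j])
qed

theorem mainTheorem6:
  fixes V :: "'v set" and E :: "nat \<Rightarrow> 'v set set" and T :: nat
    and S :: "('v \<times> 'v) list" and P :: "'v twalk list"
    and i m :: nat and a b :: 'v and t t' :: nat
  assumes line: "temporal_line V E T"
    and S_V: "set S \<subseteq> V \<times> V"
    and sol: "tdw_solution V E T S P"
    and opt: "\<And>Q. tdw_solution V E T S Q \<Longrightarrow> total_length P \<le> total_length Q"
    and i: "i < length P"
    and m: "Suc m < length (P ! i)"
    and tr1: "P ! i ! m = (a, b, t)"
    and tr2: "P ! i ! Suc m = (b, a, t')"
    and tt: "t < t'"
  shows "\<exists>j < length P. \<exists>c t''. ((c, a, t'') \<in> set (P ! j) \<or> (a, c, t'') \<in> set (P ! j))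
             \<and> t < t'' \<and> t'' < t'"
proof (rule ccontr)
  assume no_visit: "\<not> ?thesis"
  define xs ys where "xs = take m (P ! i)" and "ys = drop (Suc (Suc m)) (P ! i)"
  have detour: "P ! i = xs @ (a, b, t) # (b, a, t') # ys"
    using m tr1 tr2 unfolding xs_def ys_def
    by (metis Cons_nth_drop_Suc Suc_lessD append_take_drop_id)
  have "tdw_solution V E T S (P[i := xs @ ys])"
    using sol S_V i detour by (rule tdw_solution_remove_detour) (use no_visit in auto)
  then have "total_length P \<le> total_length (P[i := xs @ ys])"
    by (rule opt)
  moreover have "total_length (P[i := xs @ ys]) + 2 = total_length P"
    using total_length_update[OF i, of "xs @ ys"] unfolding detour by simp
  ultimately show False
    by linarith
qed

end
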